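(* Let $W, W' \in \mathcal{D}_1$ with $W = LW'R$ and $W = \begin{pmatrix} a & b \\ c & d\end{pmatrix}$. Then \[ \sigma(W) = 2\left\lfloor \frac{\xi(a,c)}{2}\right\rfloor + 2. \]
   Context: $L = \begin{pmatrix} 1 & 0 \\ 1 & 1\end{pmatrix}$, $R = \begin{pmatrix} 1 & 1 \\ 0 & 1\end{pmatrix}$. $\mathcal{D}_1$ is the set of $2\times 2$ nonnegative integer matrices of determinant $1$; the map sending a word over $\{L,R\}$ to the product of the corresponding matrices is an isomorphism of $\{L,R\}^*$ onto $\mathcal{D}_1$, so elements of $\mathcal{D}_1$ are identified with words over $\{L,R\}$. For a finite word $V$, a run is a maximal block of consecutive equal letters, and $\sigma(V)$ is the number of runs of $V$ (e.g. $\sigma(LLRRRRL)=3$). For nonnegative integers $a,c$ not both zero, $\xi(a,c)$ is the number of divisions performed by the Euclidean algorithm computing $\gcd(a,c)$ (ending when $0$ is reached), e.g. $\xi(7,0)=0$, $\xi(7,1)=\xi(1,7)=1$, $\xi(13,5)=4$. *)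

theory Defs
  imports Main
begin

datatype letter = L | R

text \<open>A 2x2 matrix (a b; c d) is represented by the tuple (a, b, c, d).\<close>
type_synonym mat2 = "nat \<times> nat \<times> nat \<times> nat"

fun mmul :: "mat2 \<Rightarrow> mat2 \<Rightarrow> mat2" where
  "mmul (a, b, c, d) (e, f, g, h) = (a*e + b*g, a*f + b*h, c*e + d*g, c*f + d*h)"

definition mat_id :: mat2 where "mat_id = (1, 0, 0, 1)"

fun letter_mat :: "letter \<Rightarrow> mat2" where
  "letter_mat L = (1, 0, 1, 1)"
| "letter_mat R = (1, 1, 0, 1)"

definition word_mat :: "letter list \<Rightarrow> mat2" where
  "word_mat w = foldr (\<lambda>x M. mmul (letter_mat x) M) w mat_id"

definition sigma :: "'a list \<Rightarrow> nat" where
  "sigma w = length (remdups_adj w)"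

function xi :: "nat \<Rightarrow> nat \<Rightarrow> nat" where
  "xi a c = (if a = 0 \<or> c = 0 then 0
             else 1 + xi (min a c) (max a c mod min a c))"
  by auto
termination
  by (relation "measure (\<lambda>(a, c). a + c)") (auto simp: min_def max_def intro: order.strict_trans2[OF mod_less_divisor])

end

theory Submission
  imports Defs
begin

text \<open>Only the first column (a, c) of W matters, and it is obtained by letting the word act on
  (1, 0) from the right to the left. Trailing letters R fix (1, 0), so we may cut W after its
  last L into U R^j with j > 0, and \<sigma>(W) = \<sigma>(U) + 1. Reading U from the right, prepending a
  letter to a word V adds the smaller entry of the column of V to the larger one or vice versa;
  this is one step of the Euclidean algorithm run backwards, and it starts a new run exactly
  when it increases \<xi> by one, the only exception being the step from L to RL. Hence
  \<xi>(a, c) \<le> \<sigma>(U) \<le> \<xi>(a, c) + 1, and \<sigma>(U) is odd since U begins and ends with L.\<close>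

declare xi.simps [simp del]

lemma xi_0_right [simp]: "xi x 0 = 0"
  by (subst xi.simps) simp

lemma xi_commute: "xi x y = xi y x"
  by (subst (1 2) xi.simps) (simp add: min.commute max.commute)

lemma xi_add2:
  assumes "0 < x"
  shows "xi x (x + y) = (if y < x then Suc (xi x y) else xi x y)"
proof -
  have "xi x (x + y) = Suc (xi x (y mod x))"
    using assms by (subst xi.simps) simp
  moreover have "xi x y = Suc (xi x (y mod x))" if "x \<le> y"
    using assms that by (subst xi.simps) (simp add: min_def max_def)
  ultimately show ?thesis by auto
qed

lemma sigma_Cons:
  "V \<noteq> [] \<Longrightarrow> sigma (a # V) = sigma V + (if a = hd V then 0 else 1)"
  by (cases V) (simp_all add: sigma_def)

lemma odd_sigma_iff_hd_eq_last:
  fixes U :: "letter list"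
  shows "U \<noteq> [] \<Longrightarrow> odd (sigma U) \<longleftrightarrow> hd U = last U"
proof (induction U)
  case (Cons a V)
  show ?case
  proof (cases "V = []")
    case True
    then show ?thesis by (simp add: sigma_def)
  next
    case False
    with Cons.IH show ?thesis
      by (cases a; cases "hd V"; cases "last V") (simp_all add: sigma_Cons)
  qed
qed simp

fun first_col :: "letter list \<Rightarrow> nat \<times> nat" where
  "first_col [] = (1, 0)"
| "first_col (L # w) = (case first_col w of (x, y) \<Rightarrow> (x, x + y))"
| "first_col (R # w) = (case first_col w of (x, y) \<Rightarrow> (x + y, y))"

lemma first_col_word_mat: "word_mat w = (a, b, c, d) \<Longrightarrow> first_col w = (a, c)"
proof (induction w arbitrary: a b c d)
  case Nil
  then show ?case by (simp add: word_mat_def mat_id_def)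
next
  case (Cons l w)
  obtain a' b' c' d' where "word_mat w = (a', b', c', d')"
    by (cases "word_mat w") auto
  moreover have "word_mat (l # w) = mmul (letter_mat l) (word_mat w)"
    by (simp add: word_mat_def)
  ultimately show ?case
    using Cons by (cases l) auto
qed

lemma first_col_append_replicate_R: "first_col (U @ replicate j R) = first_col U"
proof (induction U)
  case Nil
  then show ?case by (induction j) auto
next
  case (Cons l U)
  then show ?case by (cases l) auto
qed

lemma first_col_cases:
  assumes "U \<noteq> []" "last U = L" "first_col U = (x, y)"
  shows "U = [L] \<and> x = 1 \<and> y = 1 \<or> hd U = L \<and> 0 < x \<and> x < y \<or> hd U = R \<and> 0 < y \<and> y < x"
  using assms
proof (induction U arbitrary: x y)
  case (Cons a V)
  show ?case
  proof (cases "V = []")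
    case True
    with Cons.prems show ?thesis by auto
  next
    case False
    obtain x' y' where "first_col V = (x', y')" by (cases "first_col V") auto
    with Cons False have "0 < x'" "0 < y'" by auto
    with Cons.prems \<open>first_col V = (x', y')\<close> show ?thesis by (cases a) auto
  qed
qed simp

lemma xi_first_col_Cons:
  assumes "V \<noteq> []" "last V = L" "V \<noteq> [L]"
    and "first_col V = (x, y)" "first_col (a # V) = (x', y')"
  shows "xi x' y' = xi x y + (if a = hd V then 0 else 1)"
proof -
  have order: "hd V = L \<and> 0 < x \<and> x < y \<or> hd V = R \<and> 0 < y \<and> y < x"
    using first_col_cases[OF assms(1,2,4)] assms(3) by auto
  show ?thesis
  proof (cases a)
    case L
    with assms(4,5) have "xi x' y' = xi x (x + y)" by auto
    with order show ?thesis using L xi_add2[of x y] by auto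
  next
    case R
    with assms(4,5) have "xi x' y' = xi (x + y) y" by auto
    also have "\<dots> = xi y (y + x)"
      by (simp add: xi_commute[of "x + y"] add.commute)
    finally have "xi x' y' = xi y (y + x)" .
    with order show ?thesis using R xi_add2[of y x] xi_commute[of x y] by auto
  qed
qed

lemma xi_le_sigma_le_Suc_xi:
  assumes "U \<noteq> []" "last U = L" "first_col U = (x, y)"
  shows "xi x y \<le> sigma U \<and> sigma U \<le> Suc (xi x y)"
  using assms
proof (induction U arbitrary: x y)
  case (Cons a V)
  consider "V = []" | "V = [L]" | "V \<noteq> []" "V \<noteq> [L]" by blast
  then show ?case
  proof cases
    case 1
    moreover have "xi 1 1 = 1"
      using xi_add2[of 1 0] by simp
    ultimately show ?thesis using Cons.prems by (auto simp: sigma_def)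
  next
    case 2
    moreover have "xi 1 (1 + 1) = 1" "xi (1 + 1) 1 = 1"
      using xi_add2[of 1 0] xi_add2[of 1 1] xi_commute[of "1 + 1" 1] by simp_all
    ultimately show ?thesis using Cons.prems by (cases a) (auto simp: sigma_def)
  next
    case 3
    obtain x0 y0 where col_V: "first_col V = (x0, y0)" by (cases "first_col V") auto
    with 3 Cons have "xi x0 y0 \<le> sigma V \<and> sigma V \<le> Suc (xi x0 y0)" by simp
    with 3 Cons.prems col_V show ?thesis
      using xi_first_col_Cons[of V x0 y0 a x y] by (simp add: sigma_Cons)
  qed
qed simp

lemma split_trailing_replicate:
  "z \<in> set xs \<Longrightarrow> z \<noteq> r \<Longrightarrow> \<exists>U j. xs = U @ replicate j r \<and> U \<noteq> [] \<and> last U \<noteq> r"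
proof (induction xs rule: rev_induct)
  case (snoc x ys)
  show ?case
  proof (cases "x = r")
    case True
    with snoc obtain U j where "ys = U @ replicate j r" "U \<noteq> []" "last U \<noteq> r" by auto
    with True show ?thesis
      by (intro exI[of _ U] exI[of _ "Suc j"]) (simp add: replicate_append_same[symmetric])
  next
    case False
    then show ?thesis by (intro exI[of _ "ys @ [x]"] exI[of _ 0]) auto
  qed
qed simp

theorem lemma12:
  fixes W W' :: "letter list" and a b c d :: nat
  assumes "W = [L] @ W' @ [R]"
    and "word_mat W = (a, b, c, d)"
  shows "sigma W = 2 * (xi a c div 2) + 2"
proof -
  obtain U j where W: "W = U @ replicate j R" and "U \<noteq> []" and "last U \<noteq> R"
    using split_trailing_replicate[of L W R] assms(1) by auto
  then have "last U = L" by (cases "last U") auto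
  have "j \<noteq> 0"
    using W assms(1) \<open>last U \<noteq> R\<close> by (cases j) auto
  have "hd U = L"
    using W assms(1) \<open>U \<noteq> []\<close> by (cases U) auto
  have "sigma W = Suc (sigma U)"
    using W \<open>U \<noteq> []\<close> \<open>last U \<noteq> R\<close> \<open>j \<noteq> 0\<close>
    by (simp add: sigma_def remdups_adj_append' remdups_adj_replicate)
  moreover have "first_col U = (a, c)"
    using first_col_word_mat[OF assms(2)] W first_col_append_replicate_R by simp
  then have "xi a c \<le> sigma U \<and> sigma U \<le> Suc (xi a c)"
    using xi_le_sigma_le_Suc_xi \<open>U \<noteq> []\<close> \<open>last U = L\<close> by blast
  moreover have "odd (sigma U)"
    using odd_sigma_iff_hd_eq_last \<open>U \<noteq> []\<close> \<open>hd U = L\<close> \<open>last U = L\<close> by simp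
  ultimately show ?thesis by presburger
qed

end
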